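(* Let $(\mathcal{X},\mathcal{F},\sigma)$ be a probability space with an $\alpha$-homogeneous atomic filtration, $0<\alpha\le1/2$, and let $f\in L^1(\mathcal{X})$ be real-valued with $Sf\in L^\infty$ and $\mathbb{E}f=0$. Then for every $\lambda>0$ \[ \bigl|\{x\in\mathcal{X}: f^*(x)>\lambda\}\bigr|\le 2e^{-\alpha\lambda^2/\|Sf\|_\infty^2}. \]
   Context: An atomic filtration on a probability space $(\mathcal{X},\mathcal{F},\sigma)$ is an increasing sequence of $\sigma$-algebras $\mathcal{F}_n\subset\mathcal{F}$, $n\ge0$, with $\mathcal{F}_0=\{\varnothing,\mathcal{X}\}$, $\mathcal{F}$ generated by the $\mathcal{F}_n$, and such that for each $n$ there is a countable collection $\mathcal{D}_n$ of disjoint sets ("cubes") with every set of $\mathcal{F}_n$ a union of sets of $\mathcal{D}_n$. Write $\mathcal{D}=\bigcup_n\mathcal{D}_n$, $|A|=\sigma(A)$, and for $Q\in\mathcal{D}_n$ let $\operatorname{ch}Q=\{R\in\mathcal{D}_{n+1}:R\subset Q\}$. The filtration is $\alpha$-homogeneous if $|Q'|\ge\alpha|Q|$ for every cube $Q$ and every $Q'\in\operatorname{ch}Q$. For $|A|>0$, $\langle f\rangle_A=|A|^{-1}\int_A f$; $\mathbb{E}f=\langle f\rangle_{\mathcal{X}}$. Let $\mathbf{E}_Q f=\langle f\rangle_Q\mathbf{1}_Q$, $\mathbf{E}_nf=\sum_{Q\in\mathcal{D}_n}\mathbf{E}_Qf$, $\Delta_Q=\sum_{R\in\operatorname{ch}Q}\mathbf{E}_R-\mathbf{E}_Q$,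 and $S f=\bigl(\sum_{Q\in\mathcal{D}}|\Delta_Q f|^2\bigr)^{1/2}$. The martingale maximal function is $f^*(x)=\sup_{n\ge0}|\mathbf{E}_nf(x)|$. *)

theory Defs
  imports "HOL-Probability.Probability"
begin

definition atomic_filtration ::
  "'a measure \<Rightarrow> (nat \<Rightarrow> 'a set set) \<Rightarrow> (nat \<Rightarrow> 'a set set) \<Rightarrow> bool" where
  "atomic_filtration M F D \<longleftrightarrow>
     (\<forall>n. sigma_algebra (space M) (F n) \<and> F n \<subseteq> sets M \<and> F n \<subseteq> F (Suc n)) \<and>
     F 0 = {{}, space M} \<and>
     sets M = sigma_sets (space M) (\<Union>n. F n) \<and>
     (\<forall>n. countable (D n) \<and> disjoint (D n) \<and> D n \<subseteq> F n \<and>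
          (\<forall>A\<in>F n. \<exists>C\<subseteq>D n. A = \<Union>C))"

definition children :: "(nat \<Rightarrow> 'a set set) \<Rightarrow> nat \<Rightarrow> 'a set \<Rightarrow> 'a set set" where
  "children D n Q = {R \<in> D (Suc n). R \<subseteq> Q}"

definition homogeneous ::
  "'a measure \<Rightarrow> (nat \<Rightarrow> 'a set set) \<Rightarrow> real \<Rightarrow> bool" where
  "homogeneous M D \<alpha> \<longleftrightarrow>
     (\<forall>n. \<forall>Q\<in>D n. \<forall>Q'\<in>children D n Q. measure M Q' \<ge> \<alpha> * measure M Q)"

definition avg :: "'a measure \<Rightarrow> ('a \<Rightarrow> real) \<Rightarrow> 'a set \<Rightarrow> real" where
  "avg M f A = (LINT x:A|M. f x) / measure M A"

definition cube_exp :: "'a measure \<Rightarrow> ('a \<Rightarrow> real) \<Rightarrow> 'a set \<Rightarrow> 'a \<Rightarrow> real" where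
  "cube_exp M f Q x = avg M f Q * indicator Q x"

definition cond_exp_n ::
  "'a measure \<Rightarrow> (nat \<Rightarrow> 'a set set) \<Rightarrow> nat \<Rightarrow> ('a \<Rightarrow> real) \<Rightarrow> 'a \<Rightarrow> real" where
  "cond_exp_n M D n f x = (\<Sum>\<^sub>\<infinity>Q\<in>D n. cube_exp M f Q x)"

definition mdiff ::
  "'a measure \<Rightarrow> (nat \<Rightarrow> 'a set set) \<Rightarrow> nat \<Rightarrow> 'a set \<Rightarrow> ('a \<Rightarrow> real) \<Rightarrow> 'a \<Rightarrow> real" where
  "mdiff M D n Q f x = (\<Sum>\<^sub>\<infinity>R\<in>children D n Q. cube_exp M f R x) - cube_exp M f Q x"

definition sqfun_sq ::
  "'a measure \<Rightarrow> (nat \<Rightarrow> 'a set set) \<Rightarrow> ('a \<Rightarrow> real) \<Rightarrow> 'a \<Rightarrow> ennreal" where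
  "sqfun_sq M D f x = (\<Sum>\<^sub>\<infinity>p\<in>Sigma UNIV D. ennreal ((mdiff M D (fst p) (snd p) f x)\<^sup>2))"

definition sqfun :: "'a measure \<Rightarrow> (nat \<Rightarrow> 'a set set) \<Rightarrow> ('a \<Rightarrow> real) \<Rightarrow> 'a \<Rightarrow> ereal" where
  "sqfun M D f x = (if sqfun_sq M D f x = \<infinity> then \<infinity>
                     else ereal (sqrt (enn2real (sqfun_sq M D f x))))"

definition maxfun :: "'a measure \<Rightarrow> (nat \<Rightarrow> 'a set set) \<Rightarrow> ('a \<Rightarrow> real) \<Rightarrow> 'a \<Rightarrow> ereal" where
  "maxfun M D f x = (SUP n. ereal \<bar>cond_exp_n M D n f x\<bar>)"

end

theory Submission
  imports Defs
begin

(*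
  For t > 0 the process
    Z_n = exp (t E_n f - t^2/(4\<alpha>) \<Sum>_{k<n} (E_{k+1} f - E_k f)^2)
  is a supermartingale. On a cube Q this is the inequality
    \<Sum>_R p_R exp (y_R - y_R^2/(4\<alpha>)) \<le> 1   for  p_R = |R|/|Q| \<ge> \<alpha>,  \<Sum>_R p_R y_R = 0,
  proved by moving the positive y_R to their mean along a supporting line and pairing each
  negative y_R with a share of that mass, which leaves a two-point inequality in one variable.
  Stopping Z when E_n f first exceeds \<lambda>, and bounding the sum of squares by \<parallel>S f\<parallel>_\<infinity>^2,
  gives |{sup_n E_n f > \<lambda>}| \<le> exp (-t\<lambda> + t^2 \<parallel>S f\<parallel>_\<infinity>^2/(4\<alpha>)). The same bound for -f
  and the choice t = 2\<alpha>\<lambda>/\<parallel>S f\<parallel>_\<infinity>^2 give the theorem.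
*)

section \<open>Elementary inequalities\<close>

lemma ln_one_plus_ge_pade:
  fixes x :: real assumes "0 \<le> x" shows "2*x/(2+x) \<le> ln (1+x)"
proof -
  let ?f = "\<lambda>u::real. ln (1+u) - 2*u/(2+u)"
  have "?f 0 \<le> ?f x"
  proof (rule DERIV_nonneg_imp_nondecreasing[OF assms])
    fix u :: real assume u: "0 \<le> u" "u \<le> x"
    have "DERIV ?f u :> 1 / (1 + u) - 4 / ((2 + u) * (2 + u))"
      using u by (auto intro!: derivative_eq_intros)
    moreover have "4 / ((2 + u) * (2 + u)) \<le> 1 / (1 + u)"
    proof -
      have "4 * (1+u) \<le> (2+u)*(2+u)" by (simp add: algebra_simps)
      then show ?thesis using u by (simp add: divide_simps)
    qed
    ultimately show "\<exists>y. DERIV ?f u :> y \<and> y \<ge> 0" by force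
  qed
  then show ?thesis by simp
qed

lemma ln_ge_half_diff_inverse:
  fixes v :: real assumes "0 < v" "v \<le> 1" shows "(v - 1/v)/2 \<le> ln v"
proof -
  let ?f = "\<lambda>v::real. ln v - (v - 1/v)/2"
  have "?f 1 \<le> ?f v"
  proof (rule DERIV_nonpos_imp_nonincreasing[OF assms(2)])
    fix u :: real assume u: "v \<le> u" "u \<le> 1"
    then have u0: "u > 0" using assms by linarith
    have "DERIV ?f u :> 1 / u - (2 + 2 / (u * u)) / 4"
      using u0 by (auto intro!: derivative_eq_intros)
    moreover have "1 / u \<le> (2 + 2 / (u * u)) / 4"
    proof -
      have "4*u \<le> 2*u*u + 2"
        using sum_squares_ge_zero[of "u-1" 0] by (simp add: algebra_simps power2_eq_square)
      then show ?thesis using u0 by (simp add: divide_simps)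
    qed
    ultimately show "\<exists>y. DERIV ?f u :> y \<and> y \<le> 0" by force
  qed
  then show ?thesis by simp
qed

lemma exp_pade_le_one_plus:
  fixes x :: real assumes "0 \<le> x" shows "exp (2*x/(2+x)) \<le> 1 + x"
  using ln_one_plus_ge_pade[OF assms] ln_ge_iff[of "1+x"] assms by simp

lemma exp_le_one_plus_of_nonpos:
  fixes x :: real assumes "-1 < x" "x \<le> 0" shows "exp (x - x^2/(2*(1+x))) \<le> 1 + x"
proof -
  have "x - x^2/(2*(1+x)) = ((1+x) - 1/(1+x))/2"
    using assms by (simp add: field_simps power2_eq_square)
  also have "\<dots> \<le> ln (1+x)" using assms by (intro ln_ge_half_diff_inverse) auto
  finally show ?thesis using ln_ge_iff[of "1+x"] assms by simp
qed

lemma exp_le_one_plus_of_nonneg: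
  fixes x :: real assumes "0 \<le> x" shows "exp (x - x^2/2) \<le> 1 + x"
proof -
  have "(x - x^2/2)*(2+x) = 2*x - x^3/2"
    by (simp add: algebra_simps power2_eq_square power3_eq_cube)
  also have "\<dots> \<le> 2*x" using assms by simp
  finally have "x - x^2/2 \<le> 2*x/(2+x)" using assms by (simp add: field_simps)
  then have "exp (x - x^2/2) \<le> exp (2*x/(2+x))" by simp
  also have "\<dots> \<le> 1 + x" by (rule exp_pade_le_one_plus[OF assms])
  finally show ?thesis .
qed

lemma nonneg_on_interval_if_nonneg_at_critical_points:
  fixes g g' :: "real \<Rightarrow> real"
  assumes deriv: "\<And>u. (g has_real_derivative g' u) (at u)"
    and ends: "0 \<le> g a" "0 \<le> g b"
    and crit: "\<And>u. a < u \<Longrightarrow> u < b \<Longrightarrow> g' u = 0 \<Longrightarrow> 0 \<le> g u"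
    and x: "a \<le> x" "x \<le> b"
  shows "0 \<le> g x"
proof -
  have "continuous_on {a..b} g"
    by (meson DERIV_isCont continuous_at_imp_continuous_on deriv)
  moreover have "{a..b} \<noteq> {}" using x by simp
  ultimately obtain u where u: "u \<in> {a..b}" "\<forall>v\<in>{a..b}. g u \<le> g v"
    using continuous_attains_inf[OF compact_Icc] by blast
  have "0 \<le> g u"
  proof (cases "u = a \<or> u = b")
    case True
    then show ?thesis using ends by auto
  next
    case False
    then have inner: "a < u" "u < b" using u(1) by auto
    have "g' u = 0"
    proof (rule DERIV_local_min[OF deriv])
      show "0 < min (u - a) (b - u)" using inner by simp
      show "\<forall>y. \<bar>u - y\<bar> < min (u - a) (b - u) \<longrightarrow> g u \<le> g y"
        using u(2) by (auto simp: abs_if split: if_splits)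
    qed
    then show ?thesis using crit inner by blast
  qed
  also have "g u \<le> g x" using u(2) x by simp
  finally show ?thesis .
qed

lemma quadratic_le_rational:
  fixes q t :: real
  assumes q: "0 < q" "q \<le> 1/2" and t: "0 \<le> t"
  shows "q*t*(2-t) \<le> 2*q*t/(2*q + (2-3*q)*t)"
proof -
  have den: "2*q + (2-3*q)*t > 0" using q t by (simp add: add_pos_nonneg)
  have "0 \<le> ((2-3*q)*t - 2*(1-2*q))^2 + 2*q*(1-2*q)" using q by simp
  also have "\<dots> = (2-3*q)*((2-3*q)*t^2 - 4*(1-2*q)*t + 2*(1-2*q))"
    by (simp add: algebra_simps power2_eq_square)
  finally have "0 \<le> (2-3*q)*t^2 - 4*(1-2*q)*t + 2*(1-2*q)"
    using q by (simp add: zero_le_mult_iff)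
  then have "(2-t)*(2*q + (2-3*q)*t) \<le> 2"
    by (simp add: algebra_simps power2_eq_square)
  then have "q*t*((2-t)*(2*q + (2-3*q)*t)) \<le> q*t*2"
    using q t by (intro mult_left_mono) auto
  then show ?thesis using den by (simp add: field_simps)
qed

lemma two_point_critical_ineq_le_half:
  fixes q t :: real
  assumes q: "0 < q" "q \<le> 1/2" and t: "0 \<le> t"
  shows "exp (q*t*(2-t)) * (q + (1-2*q)*t) \<le> q + (1-q)*t"
proof -
  define d where "d = q + (1-2*q)*t"
  define x where "x = q*t/d"
  have d: "0 < d" "2*d + q*t = 2*q + (2-3*q)*t"
    unfolding d_def using q t by (simp add: add_pos_nonneg, simp add: algebra_simps)
  have x0: "0 \<le> x" unfolding x_def using q t d by simp
  have "2*x/(2+x) = 2*q*t/(2*d + q*t)"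
    unfolding x_def using d by (simp add: field_simps)
  then have "q*t*(2-t) \<le> 2*x/(2+x)" using quadratic_le_rational[OF q t] d(2) by simp
  then have "exp (q*t*(2-t)) \<le> 1 + x"
    using exp_pade_le_one_plus[OF x0] by (meson exp_le_cancel_iff order_trans)
  then have "exp (q*t*(2-t)) * d \<le> (1+x) * d"
    using d by (intro mult_right_mono) auto
  also have "(1+x) * d = q + (1-q)*t"
    unfolding x_def d_def using d by (simp add: field_simps)
  finally show ?thesis unfolding d_def .
qed

lemma two_point_critical_ineq_gt_half:
  fixes q t :: real
  assumes q: "1/2 < q" "q < 1" and t: "0 \<le> t"
  shows "exp (t*(2-t)/2) * (q + (1-2*q)*t) \<le> q + (1-q)*t"
proof (cases "q + (1-2*q)*t \<le> 0")
  case True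
  then have "exp (t*(2-t)/2) * (q + (1-2*q)*t) \<le> 0"
    by (simp add: mult_nonneg_nonpos)
  also have "0 \<le> q + (1-q)*t" using q t by (intro add_nonneg_nonneg mult_nonneg_nonneg) auto
  finally show ?thesis .
next
  case False
  have "exp (t*(2-t)/2) = exp (t - t^2/2)"
    by (simp add: field_simps power2_eq_square)
  also have "\<dots> \<le> 1 + t" by (rule exp_le_one_plus_of_nonneg[OF t])
  finally have "exp (t*(2-t)/2) * (q + (1-2*q)*t) \<le> (1+t) * (q + (1-2*q)*t)"
    using False by (intro mult_right_mono) auto
  also have "\<dots> = q + (1-q)*t + (1-2*q)*t^2" by (simp add: algebra_simps power2_eq_square)
  also have "\<dots> \<le> q + (1-q)*t" using q by (simp add: mult_nonpos_nonneg)
  finally show ?thesis .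
qed

lemma two_point_critical_ineq:
  fixes q t :: real
  assumes q: "0 < q" "q < 1" and t: "0 \<le> t"
  shows "exp (min q (1/2) * t * (2 - t)) * (q + (1-2*q)*t) \<le> q + (1-q)*t"
proof (cases "q \<le> 1/2")
  case True
  then show ?thesis using two_point_critical_ineq_le_half[OF q(1) True t] by simp
next
  case False
  then show ?thesis using two_point_critical_ineq_gt_half[of q t] q t by (simp add: mult.commute)
qed

text \<open>At a critical point of the left-hand side of \<open>two_point_ineq\<close> as a function of \<open>t\<close>,
  the inequality reduces to \<open>two_point_critical_ineq\<close>.\<close>
lemma two_point_ineq_at_critical:
  fixes q t E1 E2 :: real
  assumes q: "0 < q" "q < 1" and t: "0 < t" and E2: "E2 = exp (min q (1/2) * t * (2-t))"
    and critical: "E1 * (q + (1-q)*t) = q*(1-t)*E2"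
  shows "q*E1 + (1-q)*E2 \<le> 1"
proof -
  have pos: "0 < q + (1-q)*t" using q t by (simp add: add_pos_nonneg)
  have "(1 - q*E1 - (1-q)*E2) * (q + (1-q)*t)
        = (q + (1-q)*t) - q * (E1 * (q + (1-q)*t)) - (1-q) * E2 * (q + (1-q)*t)"
    by (simp add: algebra_simps)
  also have "\<dots> = (q + (1-q)*t) - E2 * (q + (1-2*q)*t)"
    unfolding critical by (simp add: algebra_simps power2_eq_square)
  also have "\<dots> \<ge> 0"
    using two_point_critical_ineq[OF q less_imp_le[OF t]] unfolding E2 by linarith
  finally show ?thesis using pos by (simp add: zero_le_mult_iff)
qed

text \<open>With \<open>r = min q (1/2)\<close> and \<open>g y = exp (y - y^2/(4*r))\<close>, the left-hand side is
  \<open>q * g (-(1-q)*m/q) + (1-q) * g m\<close> for \<open>m = 2*r*t\<close>.\<close>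
lemma two_point_ineq:
  fixes q t :: real
  assumes q: "0 < q" "q < 1" and t: "0 \<le> t"
  shows "q * exp (-(min q (1/2) * (2*(1-q)*t/q + ((1-q)*t/q)^2)))
           + (1-q) * exp (min q (1/2) * t * (2-t)) \<le> 1"
proof -
  define r where "r = min q (1/2)"
  have r0: "r > 0" unfolding r_def using q by simp
  define E1 where "E1 u = exp (-(r*(2*(1-q)*u/q + ((1-q)*u/q)^2)))" for u
  define E2 where "E2 u = exp (r*u*(2-u))" for u
  define g where "g u = 1 - q * E1 u - (1-q) * E2 u" for u
  define g' where "g' u = 2*r*(1-q) * (E1 u * (q + (1-q)*u)/q - E2 u * (1-u))" for u
  have "(g has_real_derivative g' u) (at u)" for u
  proof -
    have "(g has_real_derivative q * (E1 u * (r * (2*(1-q)/q + 2*((1-q)*u/q)*((1-q)/q))))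
            - (1-q) * (E2 u * (r*(2-u) - r*u))) (at u)"
      unfolding g_def[abs_def] E1_def E2_def using q by (auto intro!: derivative_eq_intros)
    moreover have "q * (E1 u * (r * (2*(1-q)/q + 2*((1-q)*u/q)*((1-q)/q))))
        - (1-q) * (E2 u * (r*(2-u) - r*u)) = g' u"
      unfolding g'_def using q by (simp add: field_simps power2_eq_square)
    ultimately show ?thesis by simp
  qed
  moreover have large: "0 \<le> g u" if "2 \<le> u" for u
  proof -
    have "0 \<le> r*(2*(1-q)*u/q + ((1-q)*u/q)^2)"
      using r0 q that by (intro mult_nonneg_nonneg add_nonneg_nonneg) auto
    moreover have "r*u*(2-u) \<le> 0" using r0 that by (simp add: mult_nonneg_nonpos)
    ultimately have "E1 u \<le> 1" "E2 u \<le> 1" unfolding E1_def E2_def by simp_all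
    then have "0 \<le> q * (1 - E1 u)" "(1-q) * (E2 u - 1) \<le> 0"
      using q by (auto intro!: mult_nonneg_nonneg mult_nonneg_nonpos)
    then show ?thesis unfolding g_def by (simp add: algebra_simps)
  qed
  moreover have "0 \<le> g u" if "0 < u" "u < 2" "g' u = 0" for u
  proof -
    have "E1 u * (q + (1-q)*u)/q - E2 u * (1-u) = 0"
      using that(3) r0 q unfolding g'_def by simp
    then have "E1 u * (q + (1-q)*u) = q*(1-u)*E2 u" using q by (simp add: field_simps)
    moreover have "E2 u = exp (min q (1/2) * u * (2-u))" unfolding E2_def r_def ..
    ultimately have "q * E1 u + (1-q) * E2 u \<le> 1"
      using two_point_ineq_at_critical[OF q that(1)] by blast
    then show ?thesis unfolding g_def by simp
  qed
  moreover have "0 \<le> g 0" unfolding g_def E1_def E2_def by simp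
  ultimately have "0 \<le> g t" if "t < 2"
    using nonneg_on_interval_if_nonneg_at_critical_points[of g g' 0 2 t] large[of 2] t that by simp
  then have "0 \<le> g t" using large by force
  then show ?thesis unfolding g_def E1_def E2_def r_def by simp
qed

section \<open>Exponential moments of mean-zero weights\<close>

definition exp_quad :: "real \<Rightarrow> real \<Rightarrow> real" where
  "exp_quad a y = exp (y - y^2/(4*a))"

lemma exp_quad_pos: "0 < exp_quad a y"
  unfolding exp_quad_def by simp

lemma exp_quad_zero [simp]: "exp_quad a 0 = 1"
  unfolding exp_quad_def by simp

lemma exp_quad_le_max:
  assumes "0 < a" shows "exp_quad a y \<le> exp_quad a (2*a)"
proof -
  have "0 \<le> (y - 2*a)^2" by simp
  then have "y - y^2/(4*a) \<le> 2*a - (2*a)^2/(4*a)"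
    using assms by (simp add: field_simps power2_eq_square)
  then show ?thesis unfolding exp_quad_def by simp
qed

lemma exp_quad_mono:
  assumes "0 < a" "y1 \<le> y2" "y2 \<le> 2*a" shows "exp_quad a y1 \<le> exp_quad a y2"
proof -
  have "(y2 - y1)*(y1 + y2) \<le> (y2 - y1)*(4*a)" using assms by (intro mult_left_mono) auto
  then have "y2^2 - y1^2 \<le> 4*a*(y2 - y1)" by (simp add: algebra_simps power2_eq_square)
  then have "(y2^2 - y1^2)/(4*a) \<le> y2 - y1" using assms(1) by (simp add: pos_divide_le_eq mult.commute)
  then have "y1 - y1^2/(4*a) \<le> y2 - y2^2/(4*a)" by (simp add: diff_divide_distrib)
  then show ?thesis unfolding exp_quad_def by simp
qed

lemma exp_quad_mono_param:
  assumes "0 < a" "a \<le> b" shows "exp_quad a y \<le> exp_quad b y"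
proof -
  have "y^2/(4*b) \<le> y^2/(4*a)" using assms by (intro divide_left_mono) auto
  then show ?thesis unfolding exp_quad_def by simp
qed

lemma exp_lin_quad_le_one_plus:
  fixes a k d :: real
  assumes a: "0 < a" "a \<le> 1/2" and k: "0 \<le> k" "k \<le> 1" and large: "2*a*k^2 \<le> 1 + k*d"
  shows "exp (k*d - d^2/(4*a)) \<le> 1 + k*d"
proof (cases "0 \<le> k*d")
  case True
  have "k^2 * d^2 \<le> 1 * d^2" using k by (intro mult_right_mono) (auto simp: power_le_one)
  then have "(k*d)^2/2 \<le> d^2/2" by (simp add: power_mult_distrib)
  also have "d^2/2 \<le> d^2/(4*a)" using a by (intro divide_left_mono) auto
  finally have "(k*d)^2/2 \<le> d^2/(4*a)" .
  then have "exp (k*d - d^2/(4*a)) \<le> exp (k*d - (k*d)^2/2)" by simp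
  also have "\<dots> \<le> 1 + k*d" by (rule exp_le_one_plus_of_nonneg[OF True])
  finally show ?thesis .
next
  case False
  then have "0 < k" using k by (cases "k = 0") auto
  then have "0 < 2*a*k^2" using a by simp
  then have pos: "0 < 1 + k*d" using large by linarith
  have "(k*d)^2 * (4*a) = d^2 * (2*(2*a*k^2))" by (simp add: algebra_simps power2_eq_square)
  also have "\<dots> \<le> d^2 * (2*(1 + k*d))" using large by (intro mult_left_mono) auto
  finally have "(k*d)^2/(2*(1 + k*d)) \<le> d^2/(4*a)" using pos a by (simp add: divide_simps)
  then have "exp (k*d - d^2/(4*a)) \<le> exp (k*d - (k*d)^2/(2*(1 + k*d)))" by simp
  also have "\<dots> \<le> 1 + k*d" using pos False by (intro exp_le_one_plus_of_nonpos) auto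
  finally show ?thesis .
qed

text \<open>The derivative of \<^term>\<open>exp_quad a\<close> at \<open>m\<close> is \<open>exp_quad a m * (1 - m/(2*a))\<close>, so this
  is the tangent line at \<open>m\<close>; it majorizes the function on \<open>z \<ge> 0\<close> although the function
  is not concave there.\<close>
lemma exp_quad_le_tangent:
  assumes a: "0 < a" "a \<le> 1/2" and m: "0 \<le> m" "m \<le> 2*a" and z: "0 \<le> z"
  shows "exp_quad a z \<le> exp_quad a m * (1 + (1 - m/(2*a))*(z - m))"
proof -
  define k where "k = 1 - m/(2*a)"
  have k: "0 \<le> k" "k \<le> 1" unfolding k_def using a m by (auto simp: field_simps)
  have mk: "m = 2*a*(1-k)" unfolding k_def using a by (simp add: field_simps)
  have "k*(-m) \<le> k*(z - m)" using z k by (intro mult_left_mono) auto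
  moreover have "1 - k*m - 2*a*k^2 = 1 - 2*a*k" unfolding mk by (simp add: algebra_simps power2_eq_square)
  moreover have "a*k \<le> 1/2 * 1" using a k by (intro mult_mono) auto
  ultimately have large: "2*a*k^2 \<le> 1 + k*(z - m)" by linarith
  have "z - z^2/(4*a) = (m - m^2/(4*a)) + (k*(z - m) - (z - m)^2/(4*a))"
    unfolding k_def using a by (simp add: field_simps power2_eq_square)
  then have "exp_quad a z = exp_quad a m * exp (k*(z - m) - (z - m)^2/(4*a))"
    unfolding exp_quad_def by (simp add: exp_add)
  also have "\<dots> \<le> exp_quad a m * (1 + k*(z - m))"
    using exp_lin_quad_le_one_plus[OF a k large] exp_quad_pos[of a m] by (intro mult_left_mono) auto
  finally show ?thesis unfolding k_def .
qed

lemma exp_quad_supporting_line: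
  assumes a: "0 < a" "a \<le> 1/2" and m: "0 \<le> m"
  obtains s where "0 \<le> s" "\<And>z. 0 \<le> z \<Longrightarrow> exp_quad a z \<le> exp_quad a (min m (2*a)) + s*(z - m)"
proof (cases "2*a \<le> m")
  case True
  then show ?thesis using that[of 0] exp_quad_le_max[OF a(1)] by simp
next
  case False
  define s where "s = exp_quad a m * (1 - m/(2*a))"
  have s: "0 \<le> s" unfolding s_def using a False exp_quad_pos[of a m] by (simp add: field_simps)
  have tangent: "exp_quad a z \<le> exp_quad a m + s*(z - m)" if "0 \<le> z" for z
    using exp_quad_le_tangent[OF a m _ that] False unfolding s_def by (simp add: algebra_simps)
  show ?thesis
  proof (rule that[OF s])
    fix z :: real assume z: "0 \<le> z"
    have "exp_quad a z \<le> exp_quad a m + s*(z - m)"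
    proof (cases "z \<le> 2*a")
      case True then show ?thesis using tangent[OF z] by simp
    next
      case False
      have "exp_quad a z \<le> exp_quad a (2*a)" by (rule exp_quad_le_max[OF a(1)])
      also have "\<dots> \<le> exp_quad a m + s*(2*a - m)" using tangent[of "2*a"] a by simp
      also have "\<dots> \<le> exp_quad a m + s*(z - m)"
        using False s by (intro add_left_mono mult_left_mono) auto
      finally show ?thesis .
    qed
    then show "exp_quad a z \<le> exp_quad a (min m (2*a)) + s*(z - m)" using False by simp
  qed
qed

lemma exp_quad_two_point_le_one:
  assumes a: "0 < a" "a \<le> 1/2" and q: "a \<le> q" "q < 1" and m: "0 < m"
    and e: "q*e = (1-q)*m"
  shows "q * exp_quad a (-e) + (1-q) * exp_quad a (min m (2*a)) \<le> 1"
proof -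
  define m' where "m' = min m (2*a)"
  define r where "r = min q (1/2)"
  have q0: "0 < q" using a q by simp
  have r: "a \<le> r" "0 < r" unfolding r_def using a q by auto
  define e' where "e' = (1-q)*m'/q"
  have m': "0 \<le> m'" "m' \<le> m" unfolding m'_def using a m by auto
  have "e = (1-q)*m/q" using e q0 by (simp add: field_simps)
  then have "e' \<le> e" "0 \<le> e'"
    unfolding e'_def using m' q q0 by (auto intro!: divide_right_mono mult_left_mono)
  then have "exp_quad a (-e) \<le> exp_quad a (-e')" using a by (intro exp_quad_mono) auto
  also have "\<dots> \<le> exp_quad r (-e')" by (rule exp_quad_mono_param[OF a(1) r(1)])
  finally have neg: "exp_quad a (-e) \<le> exp_quad r (-e')" .
  define t where "t = m'/(2*r)"
  have t0: "0 \<le> t" unfolding t_def using m' r by simp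
  have m't: "m' = 2*r*t" unfolding t_def using r by simp
  have "q * exp_quad a (-e) + (1-q) * exp_quad a m' \<le> q * exp_quad r (-e') + (1-q) * exp_quad r m'"
    using neg exp_quad_mono_param[OF a(1) r(1)] q q0 by (intro add_mono mult_left_mono) auto
  also have "\<dots> = q * exp (-(r * (2*(1-q)*t/q + ((1-q)*t/q)^2))) + (1-q) * exp (r*t*(2-t))"
    unfolding exp_quad_def e'_def m't using r q0 by (simp add: field_simps power2_eq_square)
  also have "\<dots> \<le> 1" unfolding r_def by (rule two_point_ineq[OF q0 q(2) t0])
  finally show ?thesis unfolding m'_def .
qed

lemma exp_quad_pair_le:
  assumes a: "0 < a" "a \<le> 1/2" and p: "a \<le> p" and w: "0 < w" "p + w \<le> 1"
    and m: "0 < m" and e: "p*e = w*m"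
  shows "p * exp_quad a (-e) + w * exp_quad a (min m (2*a)) \<le> p + w"
proof -
  have pw: "0 < p + w" using a p w by simp
  define q where "q = p/(p+w)"
  have "p \<le> q" unfolding q_def using a p w by (simp add: le_divide_eq mult_left_le)
  then have qa: "a \<le> q" using p by simp
  have q1: "q < 1" unfolding q_def using pw w by simp
  have "q*e = (1-q)*m" unfolding q_def using pw e by (simp add: field_simps)
  from exp_quad_two_point_le_one[OF a qa q1 m this]
  have "(p + w) * (q * exp_quad a (-e) + (1-q) * exp_quad a (min m (2*a))) \<le> (p + w) * 1"
    using pw by (intro mult_left_mono) auto
  moreover have "(p + w) * q = p" unfolding q_def using pw by simp
  moreover from this have "(p + w) * (1-q) = w" by (simp add: algebra_simps)
  ultimately show ?thesis by (simp add: distrib_left mult.assoc[symmetric])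
qed

lemma exp_quad_sum_le_at_mean:
  fixes p y :: "'i \<Rightarrow> real"
  assumes a: "0 < a" "a \<le> 1/2" and P: "finite P" "\<And>i. i \<in> P \<Longrightarrow> 0 \<le> p i" "\<And>i. i \<in> P \<Longrightarrow> 0 \<le> y i"
    and m: "0 \<le> m" "(\<Sum>i\<in>P. p i * y i) = sum p P * m"
  shows "(\<Sum>i\<in>P. p i * exp_quad a (y i)) \<le> sum p P * exp_quad a (min m (2*a))"
proof -
  obtain s where s: "0 \<le> s" "\<And>z. 0 \<le> z \<Longrightarrow> exp_quad a z \<le> exp_quad a (min m (2*a)) + s*(z - m)"
    using exp_quad_supporting_line[OF a m(1)] by blast
  have "(\<Sum>i\<in>P. p i * exp_quad a (y i)) \<le> (\<Sum>i\<in>P. p i * (exp_quad a (min m (2*a)) + s*(y i - m)))"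
    using P s(2) by (intro sum_mono mult_left_mono) auto
  also have "\<dots> = sum p P * exp_quad a (min m (2*a)) + s * ((\<Sum>i\<in>P. p i * y i) - sum p P * m)"
    by (simp add: algebra_simps sum.distrib sum_distrib_left sum_subtractf sum_distrib_right)
  finally show ?thesis using m(2) by simp
qed

text \<open>Each negative value is paired with the share of the mass \<open>Pm\<close> at \<open>m\<close> that
  balances it.\<close>
lemma exp_quad_neg_part_le:
  fixes p y :: "'i \<Rightarrow> real"
  assumes a: "0 < a" "a \<le> 1/2" and N: "finite N" "\<And>j. j \<in> N \<Longrightarrow> a \<le> p j" "\<And>j. j \<in> N \<Longrightarrow> y j < 0"
    and m: "0 \<le> m" and Pm: "0 \<le> Pm" "(\<Sum>j\<in>N. p j * (- y j)) = Pm * m" "sum p N + Pm \<le> 1"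
  shows "(\<Sum>j\<in>N. p j * exp_quad a (y j)) + Pm * exp_quad a (min m (2*a)) \<le> sum p N + Pm"
proof -
  define G where "G = exp_quad a (min m (2*a))"
  have pos: "0 < p j * (- y j)" if "j \<in> N" for j
    using N(2,3)[OF that] a by (intro mult_pos_pos) auto
  show ?thesis
  proof (cases "N = {}")
    case True
    then have "Pm = 0 \<or> m = 0" using Pm(2) by simp
    then show ?thesis using True a by auto
  next
    case False
    have "0 < (\<Sum>j\<in>N. p j * (- y j))" using N(1) False pos by (rule sum_pos)
    then have "0 < Pm * m" using Pm(2) by simp
    then have m: "0 < m" and "0 < Pm" using m Pm(1) by (auto simp: zero_less_mult_iff)
    define w where "w j = p j * (- y j) / m" for j
    have w0: "0 < w j" if "j \<in> N" for j unfolding w_def using pos[OF that] m by (rule divide_pos_pos)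
    have "sum w N = (\<Sum>j\<in>N. p j * (- y j)) / m"
      unfolding w_def by (rule sum_divide_distrib[symmetric])
    then have "sum w N = Pm" using Pm(2) m by simp
    have "p j * exp_quad a (y j) + w j * G \<le> p j + w j" if j: "j \<in> N" for j
    proof -
      have "w j \<le> sum w N"
        using N(1) j w0 by (intro member_le_sum) (auto intro: less_imp_le)
      moreover have "p j \<le> sum p N"
        using N j a by (intro member_le_sum) (auto intro: order_trans[OF less_imp_le[OF a(1)]])
      ultimately have "p j + w j \<le> 1" using Pm(3) \<open>sum w N = Pm\<close> by linarith
      moreover have "p j * (- y j) = w j * m" unfolding w_def using m by simp
      ultimately show ?thesis
        using exp_quad_pair_le[OF a N(2)[OF j] w0[OF j] _ m, of "- y j"] unfolding G_def by simp
    qed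
    then have "(\<Sum>j\<in>N. p j * exp_quad a (y j) + w j * G) \<le> (\<Sum>j\<in>N. p j + w j)"
      by (rule sum_mono)
    then show ?thesis using \<open>sum w N = Pm\<close> unfolding G_def
      by (simp add: sum.distrib sum_distrib_right[symmetric])
  qed
qed

lemma exp_quad_mean_le_one:
  fixes p y :: "'i \<Rightarrow> real"
  assumes I: "finite I" and a: "0 < a" "a \<le> 1/2" and p: "\<And>i. i \<in> I \<Longrightarrow> a \<le> p i"
    and p1: "sum p I = 1" and y0: "(\<Sum>i\<in>I. p i * y i) = 0"
  shows "(\<Sum>i\<in>I. p i * exp_quad a (y i)) \<le> 1"
proof -
  define N where "N = {i\<in>I. y i < 0}"
  define P where "P = {i\<in>I. 0 \<le> y i}"
  have NP: "N \<subseteq> I" "P \<subseteq> I" "finite N" "finite P" using I unfolding N_def P_def by auto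
  have split: "sum f I = sum f N + sum f P" for f :: "_ \<Rightarrow> real"
  proof -
    have "I = N \<union> P" "N \<inter> P = {}" unfolding N_def P_def by auto
    then show ?thesis using NP(3,4) by (simp add: sum.union_disjoint)
  qed
  have p0: "0 < p i" if "i \<in> I" for i using p[OF that] a by simp
  define T where "T = (\<Sum>j\<in>N. p j * (- y j))"
  define Pm where "Pm = sum p P"
  define m where "m = T / Pm"
  have T: "(\<Sum>i\<in>P. p i * y i) = T"
    using y0 split[of "\<lambda>i. p i * y i"] unfolding T_def by (simp add: sum_negf)
  have "0 \<le> T" unfolding T_def N_def using p0
    by (intro sum_nonneg mult_nonneg_nonneg) (auto intro: less_imp_le)
  moreover have "0 \<le> Pm" unfolding Pm_def using p0 NP(2) by (intro sum_nonneg) (auto intro: less_imp_le)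
  ultimately have m: "0 \<le> m" unfolding m_def by (rule divide_nonneg_nonneg)
  have balance: "T = Pm * m"
  proof (cases "Pm = 0")
    case True
    have "P = {}"
    proof (rule ccontr)
      assume "P \<noteq> {}"
      then have "0 < Pm" unfolding Pm_def using NP(2,4) p0 by (intro sum_pos) auto
      with True show False by simp
    qed
    then show ?thesis using T True by simp
  qed (simp add: m_def)
  have "(\<Sum>i\<in>P. p i * exp_quad a (y i)) \<le> Pm * exp_quad a (min m (2*a))"
    unfolding Pm_def
  proof (rule exp_quad_sum_le_at_mean[OF a NP(4) _ _ m])
    show "\<And>i. i \<in> P \<Longrightarrow> 0 \<le> p i" using p0 NP(2) by (meson less_imp_le subsetD)
    show "\<And>i. i \<in> P \<Longrightarrow> 0 \<le> y i" unfolding P_def by simp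
    show "(\<Sum>i\<in>P. p i * y i) = sum p P * m" using T balance unfolding Pm_def by simp
  qed
  moreover have "(\<Sum>j\<in>N. p j * exp_quad a (y j)) + Pm * exp_quad a (min m (2*a)) \<le> sum p N + Pm"
  proof (rule exp_quad_neg_part_le[OF a NP(3) _ _ m \<open>0 \<le> Pm\<close>])
    show "\<And>j. j \<in> N \<Longrightarrow> a \<le> p j" "\<And>j. j \<in> N \<Longrightarrow> y j < 0"
      using p NP(1) unfolding N_def by auto
    show "(\<Sum>j\<in>N. p j * (- y j)) = Pm * m" using balance unfolding T_def .
    show "sum p N + Pm \<le> 1" using split[of p] p1 unfolding Pm_def by simp
  qed
  ultimately show ?thesis using split[of p] split[of "\<lambda>i. p i * exp_quad a (y i)"] p1
    unfolding Pm_def by linarith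
qed

section \<open>Cubes of a homogeneous filtration\<close>

locale homogeneous_filtration = prob_space M for M :: "'a measure" +
  fixes F D :: "nat \<Rightarrow> 'a set set" and \<alpha> :: real
  assumes atomic: "atomic_filtration M F D" and homogeneous: "homogeneous M D \<alpha>"
    and alpha_pos: "0 < \<alpha>"
begin

lemma atomic_filtration_F: "\<forall>n. sigma_algebra (space M) (F n) \<and> F n \<subseteq> sets M \<and> F n \<subseteq> F (Suc n)"
  using atomic unfolding atomic_filtration_def by (elim conjE)

lemma F_zero: "F 0 = {{}, space M}"
  using atomic unfolding atomic_filtration_def by (elim conjE)

lemma atomic_filtration_D: "\<forall>n. countable (D n) \<and> disjoint (D n) \<and> D n \<subseteq> F n \<and> (\<forall>A\<in>F n. \<exists>C\<subseteq>D n. A = \<Union>C)"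
  using atomic unfolding atomic_filtration_def by (elim conjE)

lemma F_sigma_algebra: "sigma_algebra (space M) (F n)"
  using atomic_filtration_F by simp

lemma F_subset_sets: "F n \<subseteq> sets M"
  using atomic_filtration_F by simp

lemma F_mono: "F n \<subseteq> F (Suc n)"
  using atomic_filtration_F by simp

lemma D_disjoint: "disjoint (D n)"
  using atomic_filtration_D by simp

lemma D_subset_F: "D n \<subseteq> F n"
  using atomic_filtration_D by simp

lemma F_Union_D: "A \<in> F n \<Longrightarrow> \<exists>C\<subseteq>D n. A = \<Union>C"
  using atomic_filtration_D by simp

lemma D_sets: "Q \<in> D n \<Longrightarrow> Q \<in> sets M"
  using D_subset_F F_subset_sets by blast

lemma D_subset_space: "Q \<in> D n \<Longrightarrow> Q \<subseteq> space M"
  using D_sets sets.sets_into_space by blast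

lemma D_cover: "x \<in> space M \<Longrightarrow> \<exists>Q\<in>D n. x \<in> Q"
  using F_Union_D[OF algebra.top[OF sigma_algebra.axioms(1)[OF F_sigma_algebra[of n]]]] by blast

lemma D_eq_if_common_point: "Q \<in> D n \<Longrightarrow> Q' \<in> D n \<Longrightarrow> x \<in> Q \<Longrightarrow> x \<in> Q' \<Longrightarrow> Q = Q'"
  using D_disjoint[of n] unfolding disjoint_def by blast

lemma D_refine: "Q \<in> D n \<Longrightarrow> x \<in> Q \<Longrightarrow> \<exists>R\<in>D (Suc n). x \<in> R \<and> R \<subseteq> Q"
  using F_Union_D[of Q "Suc n"] D_subset_F F_mono by blast

lemma D_parent:
  assumes R: "R \<in> D (Suc n)" "x \<in> R" shows "\<exists>Q\<in>D n. R \<subseteq> Q"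
proof -
  obtain Q where Q: "Q \<in> D n" "x \<in> Q" using D_cover R D_subset_space by blast
  then obtain R' where "R' \<in> D (Suc n)" "x \<in> R'" "R' \<subseteq> Q" using D_refine by blast
  then show ?thesis using D_eq_if_common_point R Q by blast
qed

lemma D_zero: "Q \<in> D 0 \<Longrightarrow> Q = {} \<or> Q = space M"
  using D_subset_F[of 0] F_zero by blast

lemma measure_child_ge: "Q \<in> D n \<Longrightarrow> R \<in> D (Suc n) \<Longrightarrow> R \<subseteq> Q \<Longrightarrow> \<alpha> * measure M Q \<le> measure M R"
  using homogeneous unfolding homogeneous_def children_def by blast

lemma measure_D_ge: "Q \<in> D n \<Longrightarrow> Q \<noteq> {} \<Longrightarrow> \<alpha>^n \<le> measure M Q"
proof (induction n arbitrary: Q)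
  case 0
  then have "Q = space M" using D_zero by blast
  then show ?case by (simp add: prob_space)
next
  case (Suc n)
  then obtain x where x: "x \<in> Q" by blast
  obtain P where P: "P \<in> D n" "Q \<subseteq> P" using D_parent[OF Suc.prems(1) x] by blast
  then have "\<alpha> * \<alpha>^n \<le> \<alpha> * measure M P" using Suc.IH x alpha_pos by auto
  also have "\<dots> \<le> measure M Q" using measure_child_ge P Suc.prems by blast
  finally show ?case by simp
qed

lemma measure_D_pos: "Q \<in> D n \<Longrightarrow> Q \<noteq> {} \<Longrightarrow> 0 < measure M Q"
  using measure_D_ge[of Q n] alpha_pos by (meson less_le_trans zero_less_power)

lemma empty_notin_D_Suc: "{} \<notin> D (Suc n)"
proof
  assume "{} \<in> D (Suc n)"
  obtain x where "x \<in> space M" using not_empty by blast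
  then obtain Q where Q: "Q \<in> D n" "x \<in> Q" using D_cover by blast
  then have "0 < \<alpha> * measure M Q" using alpha_pos measure_D_pos by (intro mult_pos_pos) auto
  moreover have "\<alpha> * measure M Q \<le> measure M {}" using measure_child_ge[OF Q(1) \<open>{} \<in> D (Suc n)\<close>] by simp
  ultimately show False by simp
qed

lemma finite_D: "finite (D n)"
proof -
  have "finite (D n - {{}}) \<and> card (D n - {{}}) \<le> nat \<lfloor>1 / \<alpha>^n\<rfloor>"
  proof (rule finite_if_finite_subsets_card_bdd)
    fix G assume G: "G \<subseteq> D n - {{}}" "finite G"
    have "real (card G) * \<alpha>^n = (\<Sum>Q\<in>G. \<alpha>^n)" by simp
    also have "\<dots> \<le> (\<Sum>Q\<in>G. measure M Q)"
      using G measure_D_ge by (intro sum_mono) blast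
    also have "\<dots> = measure M (\<Union>Q\<in>G. Q)"
    proof (rule finite_measure_finite_Union[symmetric])
      show "(\<lambda>Q. Q) ` G \<subseteq> sets M" using G D_sets by blast
      show "disjoint_family_on (\<lambda>Q. Q) G"
        unfolding disjoint_family_on_def using G D_eq_if_common_point by blast
    qed fact
    also have "\<dots> \<le> 1" by (rule prob_le_1)
    finally have "real (card G) \<le> 1 / \<alpha>^n" using alpha_pos by (simp add: field_simps)
    then show "card G \<le> nat \<lfloor>1 / \<alpha>^n\<rfloor>" by linarith
  qed
  then show ?thesis by (metis finite_Diff2 finite.emptyI finite_insert)
qed

definition cube :: "nat \<Rightarrow> 'a \<Rightarrow> 'a set" where
  "cube n x = (THE Q. Q \<in> D n \<and> x \<in> Q)"

lemma cube_eq: assumes "Q \<in> D n" "x \<in> Q" shows "cube n x = Q"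
  unfolding cube_def
proof (rule the_equality)
  show "Q \<in> D n \<and> x \<in> Q" using assms by blast
  show "Q' = Q" if "Q' \<in> D n \<and> x \<in> Q'" for Q' using that D_eq_if_common_point assms by blast
qed

lemma
  assumes "x \<in> space M"
  shows cube_in_D: "cube n x \<in> D n" and mem_cube: "x \<in> cube n x"
proof -
  obtain Q where "Q \<in> D n" "x \<in> Q" using D_cover[OF assms] by blast
  then show "cube n x \<in> D n" "x \<in> cube n x" using cube_eq by auto
qed

lemma cube_Suc_subset: assumes "x \<in> space M" shows "cube (Suc n) x \<subseteq> cube n x"
proof -
  obtain R where R: "R \<in> D (Suc n)" "x \<in> R" "R \<subseteq> cube n x"
    using D_refine[OF cube_in_D[OF assms] mem_cube[OF assms]] by blast
  then show ?thesis using cube_eq[OF R(1,2)] by simp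
qed

lemma cube_antimono: assumes "k \<le> n" "x \<in> space M" shows "cube n x \<subseteq> cube k x"
  using assms(1)
proof (induction n rule: dec_induct)
  case (step m)
  then show ?case using cube_Suc_subset[OF assms(2), of m] by blast
qed simp

lemma cube_eq_coarser:
  assumes "x \<in> space M" "y \<in> space M" "cube n x = cube n y" "k \<le> n"
  shows "cube k x = cube k y"
proof -
  have "y \<in> cube k x" using mem_cube[OF assms(2), of n] assms(3) cube_antimono[OF assms(4,1)] by blast
  then show ?thesis using cube_eq[OF cube_in_D[OF assms(1)]] by simp
qed

lemma children_D: "R \<in> children D n Q \<Longrightarrow> R \<in> D (Suc n) \<and> R \<subseteq> Q"
  unfolding children_def by blast

lemma finite_children: "finite (children D n Q)"
  using finite_D[of "Suc n"] unfolding children_def by simp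

lemma cube_Suc_in_children: "Q \<in> D n \<Longrightarrow> x \<in> Q \<Longrightarrow> cube (Suc n) x \<in> children D n Q"
  unfolding children_def
  using cube_eq cube_in_D cube_Suc_subset D_subset_space by blast

lemma sum_D_indicator:
  assumes x: "x \<in> space M"
  shows "(\<Sum>Q\<in>D n. f Q * indicator Q x) = (f (cube n x) :: real)"
proof -
  have "(\<Sum>Q\<in>D n. f Q * indicator Q x) = (\<Sum>Q\<in>D n. if Q = cube n x then f Q else 0)"
  proof (rule sum.cong[OF refl])
    fix Q assume Q: "Q \<in> D n"
    show "f Q * indicator Q x = (if Q = cube n x then f Q else 0)"
    proof (cases "x \<in> Q")
      case True
      then show ?thesis using cube_eq[OF Q] by simp
    next
      case False
      then show ?thesis using mem_cube[OF x, of n] by auto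
    qed
  qed
  also have "\<dots> = f (cube n x)" using finite_D cube_in_D[OF x] by simp
  finally show ?thesis .
qed

lemma sum_children_indicator:
  assumes Q: "Q \<in> D n"
  shows "(\<Sum>R\<in>children D n Q. f R * indicator R x)
           = (if x \<in> Q then f (cube (Suc n) x) else (0::real))"
proof (cases "x \<in> Q")
  case True
  then have x: "x \<in> space M" using Q D_subset_space by blast
  have "(\<Sum>R\<in>children D n Q. f R * indicator R x)
        = (\<Sum>R\<in>children D n Q. if R = cube (Suc n) x then f R else 0)"
  proof (rule sum.cong[OF refl])
    fix R assume R: "R \<in> children D n Q"
    show "f R * indicator R x = (if R = cube (Suc n) x then f R else 0)"
    proof (cases "x \<in> R")
      case True
      then show ?thesis using cube_eq[of R "Suc n" x] children_D[OF R] by simp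
    next
      case False
      then show ?thesis using mem_cube[OF x, of "Suc n"] by auto
    qed
  qed
  also have "\<dots> = f (cube (Suc n) x)" using finite_children cube_Suc_in_children[OF Q True] by simp
  finally show ?thesis using True by simp
next
  case False
  then have "indicator R x = (0::real)" if "R \<in> children D n Q" for R
    using children_D[OF that] by (auto simp: indicator_def)
  then show ?thesis using False by simp
qed

lemma indicator_eq_sum_children:
  "Q \<in> D n \<Longrightarrow> indicator Q x = (\<Sum>R\<in>children D n Q. indicator R x :: real)"
  using sum_children_indicator[of Q n "\<lambda>_. 1" x] by (simp add: indicator_def)

lemma D_Suc_eq_Union_children: "D (Suc n) = (\<Union>Q\<in>D n. children D n Q)"
proof (intro equalityI subsetI)
  fix R assume R: "R \<in> D (Suc n)"
  then have "R \<noteq> {}" using empty_notin_D_Suc by auto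
  then obtain x where "x \<in> R" by blast
  then obtain Q where "Q \<in> D n" "R \<subseteq> Q" using D_parent[OF R] by blast
  then show "R \<in> (\<Union>Q\<in>D n. children D n Q)" using R unfolding children_def by blast
qed (use children_D in blast)

lemma sum_D_Suc: "(\<Sum>R\<in>D (Suc n). f R) = (\<Sum>Q\<in>D n. \<Sum>R\<in>children D n Q. f R)"
  unfolding D_Suc_eq_Union_children
proof (rule sum.UNION_disjoint[OF finite_D])
  show "\<forall>Q\<in>D n. finite (children D n Q)" using finite_children by blast
  show "\<forall>Q\<in>D n. \<forall>Q'\<in>D n. Q \<noteq> Q' \<longrightarrow> children D n Q \<inter> children D n Q' = {}"
  proof (intro ballI impI equals0I)
    fix Q Q' R assume QQ': "Q \<in> D n" "Q' \<in> D n" "Q \<noteq> Q'"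
      and R: "R \<in> children D n Q \<inter> children D n Q'"
    then have "R \<noteq> {}" using children_D[of R n Q] empty_notin_D_Suc[of n] by auto
    then obtain x where "x \<in> R" by blast
    then show False using R QQ' children_D D_eq_if_common_point by blast
  qed
qed

text \<open>These are the \<open>F n\<close>-measurable functions.\<close>
definition cube_constant :: "nat \<Rightarrow> ('a \<Rightarrow> real) \<Rightarrow> bool" where
  "cube_constant n u \<longleftrightarrow> (\<forall>x\<in>space M. \<forall>y\<in>space M. cube n x = cube n y \<longrightarrow> u x = u y)"

lemma cube_constantD:
  "cube_constant n u \<Longrightarrow> x \<in> space M \<Longrightarrow> y \<in> space M \<Longrightarrow> cube n x = cube n y \<Longrightarrow> u x = u y"
  unfolding cube_constant_def by blast

lemma cube_constantI:
  assumes "\<And>x y. x \<in> space M \<Longrightarrow> y \<in> space M \<Longrightarrow> (\<forall>k\<le>n. cube k x = cube k y) \<Longrightarrow> u x = u y"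
  shows "cube_constant n u"
  unfolding cube_constant_def
proof (intro ballI impI)
  fix x y assume xy: "x \<in> space M" "y \<in> space M" "cube n x = cube n y"
  then have "\<forall>k\<le>n. cube k x = cube k y" using cube_eq_coarser by blast
  then show "u x = u y" using assms xy by blast
qed

lemma cube_constant_mono: "k \<le> n \<Longrightarrow> cube_constant k u \<Longrightarrow> cube_constant n u"
  unfolding cube_constant_def using cube_eq_coarser by blast

lemma cube_constant_mult:
  "cube_constant n u \<Longrightarrow> cube_constant n v \<Longrightarrow> cube_constant n (\<lambda>x. u x * v x)"
  unfolding cube_constant_def by metis

definition cube_point :: "'a set \<Rightarrow> 'a" where
  "cube_point Q = (SOME x. x \<in> Q)"

lemma
  assumes "Q \<in> D n" "Q \<noteq> {}"
  shows cube_point_mem: "cube_point Q \<in> Q"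
    and cube_point_space: "cube_point Q \<in> space M"
    and cube_cube_point: "cube n (cube_point Q) = Q"
proof -
  show "cube_point Q \<in> Q" unfolding cube_point_def using assms(2) by (rule someI_ex[OF ex_in_conv[THEN iffD2]])
  then show "cube_point Q \<in> space M" "cube n (cube_point Q) = Q"
    using D_subset_space[OF assms(1)] cube_eq[OF assms(1)] by auto
qed

lemma cube_constant_eq_sum:
  assumes "cube_constant n u" "x \<in> space M"
  shows "u x = (\<Sum>Q\<in>D n. u (cube_point Q) * indicator Q x)"
proof -
  have ne: "cube n x \<noteq> {}" using mem_cube[OF assms(2)] by blast
  have "u (cube_point (cube n x)) = u x"
    using cube_constantD[OF assms(1) cube_point_space[OF cube_in_D[OF assms(2)] ne] assms(2)]
      cube_cube_point[OF cube_in_D[OF assms(2)] ne] by simp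
  then show ?thesis using sum_D_indicator[OF assms(2), where f="\<lambda>Q. u (cube_point Q)"] by simp
qed

lemma
  assumes "cube_constant n u"
  shows integrable_cube_constant: "integrable M u"
    and integral_cube_constant: "integral\<^sup>L M u = (\<Sum>Q\<in>D n. u (cube_point Q) * measure M Q)"
proof -
  let ?v = "\<lambda>x. \<Sum>Q\<in>D n. u (cube_point Q) * indicator Q x"
  have eq: "x \<in> space M \<Longrightarrow> u x = ?v x" for x by (rule cube_constant_eq_sum[OF assms])
  have "integrable M ?v"
    using D_sets by (intro Bochner_Integration.integrable_sum Bochner_Integration.integrable_mult_right
        integrable_real_indicator) (auto simp: less_top[symmetric])
  moreover have "integrable M u = integrable M ?v"
    by (rule Bochner_Integration.integrable_cong[OF refl]) (rule eq)
  ultimately show "integrable M u" by simp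
  have "integral\<^sup>L M u = integral\<^sup>L M ?v" by (rule Bochner_Integration.integral_cong[OF refl eq])
  also have "\<dots> = (\<Sum>Q\<in>D n. integral\<^sup>L M (\<lambda>x. u (cube_point Q) * indicator Q x))"
    using D_sets by (intro Bochner_Integration.integral_sum Bochner_Integration.integrable_mult_right
        integrable_real_indicator) (auto simp: less_top[symmetric])
  also have "\<dots> = (\<Sum>Q\<in>D n. u (cube_point Q) * measure M Q)"
    using D_sets by (intro sum.cong refl) (simp add: Int_absorb2 D_subset_space)
  finally show "integral\<^sup>L M u = (\<Sum>Q\<in>D n. u (cube_point Q) * measure M Q)" .
qed

lemma sum_children_set_integral:
  fixes h :: "'a \<Rightarrow> real"
  assumes h: "integrable M h" and Q: "Q \<in> D n"
  shows "(\<Sum>R\<in>children D n Q. set_lebesgue_integral M R h) = set_lebesgue_integral M Q h"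
proof -
  have "(\<Sum>R\<in>children D n Q. set_lebesgue_integral M R h)
        = integral\<^sup>L M (\<lambda>x. \<Sum>R\<in>children D n Q. indicator R x * h x)"
    unfolding set_lebesgue_integral_def
  proof (simp, intro Bochner_Integration.integral_sum[symmetric])
    fix R assume "R \<in> children D n Q"
    then have "R \<in> sets M" using children_D D_sets by blast
    from integrable_mult_indicator[OF this h] show "integrable M (\<lambda>x. indicator R x * h x)" by simp
  qed
  also have "\<dots> = set_lebesgue_integral M Q h"
    unfolding set_lebesgue_integral_def using indicator_eq_sum_children[OF Q]
    by (simp add: sum_distrib_right)
  finally show ?thesis .
qed

lemma sum_children_measure:
  assumes "Q \<in> D n" shows "(\<Sum>R\<in>children D n Q. measure M R) = measure M Q"
proof -
  have measure_eq: "set_lebesgue_integral M A (\<lambda>_. 1::real) = measure M A" if "A \<in> sets M" for A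
    using that by (subst set_integral_const) (auto simp: emeasure_eq_measure)
  have "(\<Sum>R\<in>children D n Q. measure M R) = (\<Sum>R\<in>children D n Q. set_lebesgue_integral M R (\<lambda>_. 1::real))"
    using children_D D_sets by (intro sum.cong refl measure_eq[symmetric]) blast
  also have "\<dots> = measure M Q"
    using sum_children_set_integral[of "\<lambda>_. 1" Q n] assms D_sets measure_eq by simp
  finally show ?thesis .
qed

section \<open>The exponential supermartingale\<close>

definition mart :: "('a \<Rightarrow> real) \<Rightarrow> nat \<Rightarrow> 'a \<Rightarrow> real" where
  "mart h n x = avg M h (cube n x)"

definition sqsum :: "('a \<Rightarrow> real) \<Rightarrow> nat \<Rightarrow> 'a \<Rightarrow> real" where
  "sqsum h n x = (\<Sum>k<n. (mart h (Suc k) x - mart h k x)^2)"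

definition exp_mart :: "('a \<Rightarrow> real) \<Rightarrow> real \<Rightarrow> nat \<Rightarrow> 'a \<Rightarrow> real" where
  "exp_mart h t n x = exp (t * mart h n x - t^2/(4*\<alpha>) * sqsum h n x)"

lemma cube_constant_mart: "k \<le> n \<Longrightarrow> cube_constant n (mart h k)"
  unfolding cube_constant_def mart_def using cube_eq_coarser by metis

lemma exp_mart_cong: "\<forall>k\<le>n. cube k x = cube k y \<Longrightarrow> exp_mart h t n x = exp_mart h t n y"
  unfolding exp_mart_def sqsum_def mart_def by simp

lemma cube_constant_exp_mart: "cube_constant n (exp_mart h t n)"
  by (rule cube_constantI) (rule exp_mart_cong)

lemma exp_mart_pos: "0 < exp_mart h t n x"
  unfolding exp_mart_def by simp

lemma exp_mart_Suc:
  "exp_mart h t (Suc n) x = exp_mart h t n x * exp_quad \<alpha> (t * (mart h (Suc n) x - mart h n x))"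
proof -
  define d where "d = mart h (Suc n) x - mart h n x"
  have "sqsum h (Suc n) x = sqsum h n x + d^2" "mart h (Suc n) x = mart h n x + d"
    unfolding sqsum_def d_def by simp_all
  then have "t * mart h (Suc n) x - t^2/(4*\<alpha>) * sqsum h (Suc n) x
        = (t * mart h n x - t^2/(4*\<alpha>) * sqsum h n x) + (t * d - (t * d)^2/(4*\<alpha>))"
    by (simp add: algebra_simps power_mult_distrib add_divide_distrib)
  then show ?thesis unfolding exp_mart_def exp_quad_def d_def[symmetric] by (simp add: exp_add)
qed

text \<open>The increments \<open>t (\<langle>h\<rangle>_R - \<langle>h\<rangle>_Q)\<close> over the children \<open>R\<close> of \<open>Q\<close> have mean zero
  for the weights \<open>|R|/|Q| \<ge> \<alpha>\<close>.\<close>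
lemma sum_children_exp_quad_le:
  assumes alpha: "\<alpha> \<le> 1/2" and h: "integrable M h" and Q: "Q \<in> D n" "Q \<noteq> {}"
  shows "(\<Sum>R\<in>children D n Q. measure M R * exp_quad \<alpha> (t * (avg M h R - avg M h Q))) \<le> measure M Q"
proof -
  have mQ: "0 < measure M Q" using measure_D_pos[OF Q] .
  define p where "p R = measure M R / measure M Q" for R
  define y where "y R = t * (avg M h R - avg M h Q)" for R
  have "\<alpha> \<le> p R" if "R \<in> children D n Q" for R
    using measure_child_ge[OF Q(1)] children_D[OF that] mQ unfolding p_def by (simp add: le_divide_eq)
  moreover have "sum p (children D n Q) = 1"
    unfolding p_def using sum_children_measure[OF Q(1)] mQ by (simp add: sum_divide_distrib[symmetric])
  moreover have "(\<Sum>R\<in>children D n Q. p R * y R) = 0"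
  proof -
    have integral_eq: "measure M R * avg M h R = set_lebesgue_integral M R h" if "R \<in> D k" "R \<noteq> {}" for R k
      using measure_D_pos[OF that] unfolding avg_def by simp
    have "(\<Sum>R\<in>children D n Q. measure M R * avg M h R) = set_lebesgue_integral M Q h"
      using sum_children_set_integral[OF h Q(1)] children_D empty_notin_D_Suc integral_eq
      by (metis (no_types, lifting) sum.cong)
    then have "(\<Sum>R\<in>children D n Q. measure M R * avg M h R) = (\<Sum>R\<in>children D n Q. measure M R) * avg M h Q"
      using sum_children_measure[OF Q(1)] integral_eq[OF Q] by simp
    moreover have "(\<Sum>R\<in>children D n Q. p R * y R) = t / measure M Q *
        ((\<Sum>R\<in>children D n Q. measure M R * avg M h R) - (\<Sum>R\<in>children D n Q. measure M R) * avg M h Q)"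
      unfolding p_def y_def by (simp add: sum_distrib_left sum_distrib_right sum_subtractf algebra_simps)
    ultimately show ?thesis by simp
  qed
  ultimately have "(\<Sum>R\<in>children D n Q. p R * exp_quad \<alpha> (y R)) \<le> 1"
    using exp_quad_mean_le_one[OF finite_children alpha_pos alpha] by blast
  then show ?thesis unfolding p_def y_def using mQ by (simp add: sum_divide_distrib[symmetric] divide_le_eq)
qed

lemma
  assumes Q: "Q \<in> D n" "Q \<noteq> {}" and R: "R \<in> children D n Q"
  shows cube_constant_at_child_point: "cube_constant n v \<Longrightarrow> v (cube_point R) = v (cube_point Q)"
    and exp_mart_Suc_at_child_point: "exp_mart h t (Suc n) (cube_point R)
          = exp_mart h t n (cube_point Q) * exp_quad \<alpha> (t * (avg M h R - avg M h Q))"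
proof -
  have RD: "R \<in> D (Suc n)" "R \<subseteq> Q" "R \<noteq> {}" using children_D[OF R] empty_notin_D_Suc by auto
  have same: "cube n (cube_point R) = cube n (cube_point Q)"
    using cube_eq[OF Q(1)] cube_point_mem[OF RD(1,3)] RD(2) cube_cube_point[OF Q] by auto
  show v: "v (cube_point R) = v (cube_point Q)" if "cube_constant n v" for v
    using cube_constantD[OF that cube_point_space[OF RD(1,3)] cube_point_space[OF Q] same] .
  have "mart h (Suc n) (cube_point R) = avg M h R" "mart h n (cube_point R) = avg M h Q"
    unfolding mart_def using cube_cube_point[OF RD(1,3)] same cube_cube_point[OF Q] by auto
  then show "exp_mart h t (Suc n) (cube_point R)
          = exp_mart h t n (cube_point Q) * exp_quad \<alpha> (t * (avg M h R - avg M h Q))"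
    unfolding exp_mart_Suc v[OF cube_constant_exp_mart] by simp
qed

lemma integral_exp_mart_Suc_le:
  assumes alpha: "\<alpha> \<le> 1/2" and h: "integrable M h"
    and u: "cube_constant n u" "\<And>x. x \<in> space M \<Longrightarrow> 0 \<le> u x"
  shows "integral\<^sup>L M (\<lambda>x. u x * exp_mart h t (Suc n) x) \<le> integral\<^sup>L M (\<lambda>x. u x * exp_mart h t n x)"
proof -
  define c where "c Q = u (cube_point Q) * exp_mart h t n (cube_point Q)" for Q
  define W where "W R = u (cube_point R) * exp_mart h t (Suc n) (cube_point R) * measure M R" for R
  have "(\<Sum>R\<in>children D n Q. W R) \<le> c Q * measure M Q" if Q: "Q \<in> D n" for Q
  proof (cases "Q = {}")
    case True
    then have "children D n Q = {}" using children_D empty_notin_D_Suc by fastforce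
    then show ?thesis using True by simp
  next
    case False
    have "0 \<le> c Q" unfolding c_def
      using u(2)[OF cube_point_space[OF Q False]] exp_mart_pos
      by (intro mult_nonneg_nonneg) (auto intro: less_imp_le)
    have "(\<Sum>R\<in>children D n Q. W R)
        = c Q * (\<Sum>R\<in>children D n Q. measure M R * exp_quad \<alpha> (t * (avg M h R - avg M h Q)))"
      unfolding sum_distrib_left W_def c_def
      by (intro sum.cong refl) (simp add: cube_constant_at_child_point[OF Q False _ u(1)]
          exp_mart_Suc_at_child_point[OF Q False])
    also have "\<dots> \<le> c Q * measure M Q"
      using sum_children_exp_quad_le[OF alpha h Q False] \<open>0 \<le> c Q\<close> by (rule mult_left_mono)
    finally show ?thesis .
  qed
  then have "(\<Sum>Q\<in>D n. \<Sum>R\<in>children D n Q. W R) \<le> (\<Sum>Q\<in>D n. c Q * measure M Q)"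
    by (rule sum_mono)
  moreover have "integral\<^sup>L M (\<lambda>x. u x * exp_mart h t (Suc n) x) = (\<Sum>R\<in>D (Suc n). W R)"
    using integral_cube_constant[OF cube_constant_mult[OF cube_constant_mono[OF _ u(1)] cube_constant_exp_mart]]
    unfolding W_def by simp
  moreover have "integral\<^sup>L M (\<lambda>x. u x * exp_mart h t n x) = (\<Sum>Q\<in>D n. c Q * measure M Q)"
    using integral_cube_constant[OF cube_constant_mult[OF u(1) cube_constant_exp_mart]] unfolding c_def by simp
  ultimately show ?thesis by (simp add: sum_D_Suc)
qed

definition below :: "('a \<Rightarrow> real) \<Rightarrow> real \<Rightarrow> nat \<Rightarrow> 'a \<Rightarrow> bool" where
  "below h lam n x \<longleftrightarrow> (\<forall>k\<le>n. mart h k x \<le> lam)"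

primrec stopped_exp_mart :: "('a \<Rightarrow> real) \<Rightarrow> real \<Rightarrow> real \<Rightarrow> nat \<Rightarrow> 'a \<Rightarrow> real" where
  "stopped_exp_mart h t lam 0 x = exp_mart h t 0 x"
| "stopped_exp_mart h t lam (Suc n) x =
     (if below h lam n x then exp_mart h t (Suc n) x else stopped_exp_mart h t lam n x)"

lemma below_cong: "\<forall>k\<le>n. cube k x = cube k y \<Longrightarrow> below h lam n x = below h lam n y"
  unfolding below_def mart_def by simp

lemma cube_constant_below: "cube_constant n (\<lambda>x. of_bool (below h lam n x))"
proof (rule cube_constantI)
  fix x y assume "\<forall>k\<le>n. cube k x = cube k y"
  from below_cong[OF this]
  show "of_bool (below h lam n x) = (of_bool (below h lam n y) :: real)" by simp
qed

lemma stopped_exp_mart_cong: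
  "\<forall>k\<le>n. cube k x = cube k y \<Longrightarrow> stopped_exp_mart h t lam n x = stopped_exp_mart h t lam n y"
proof (induction n)
  case 0
  then show ?case using exp_mart_cong[OF 0] by simp
next
  case (Suc n)
  have cubes: "\<forall>k\<le>n. cube k x = cube k y" using Suc.prems by simp
  then show ?case using Suc.IH below_cong[OF cubes] exp_mart_cong[OF Suc.prems] by simp
qed

lemma cube_constant_stopped_exp_mart: "cube_constant n (stopped_exp_mart h t lam n)"
  by (rule cube_constantI) (rule stopped_exp_mart_cong)

lemma stopped_exp_mart_pos: "0 < stopped_exp_mart h t lam n x"
  by (induction n) (simp_all add: exp_mart_pos)

lemma stopped_exp_mart_eq: "below h lam n x \<Longrightarrow> stopped_exp_mart h t lam n x = exp_mart h t n x"
proof (induction n)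
  case (Suc n)
  then have "below h lam n x" unfolding below_def by simp
  then show ?case by simp
qed simp

lemma stopped_exp_mart_Suc_eq:
  "stopped_exp_mart h t lam (Suc n) x
     = stopped_exp_mart h t lam n x + of_bool (below h lam n x) * (exp_mart h t (Suc n) x - exp_mart h t n x)"
  by (simp add: stopped_exp_mart_eq)

lemma integral_stopped_exp_mart_Suc_le:
  assumes alpha: "\<alpha> \<le> 1/2" and h: "integrable M h"
  shows "integral\<^sup>L M (stopped_exp_mart h t lam (Suc n)) \<le> integral\<^sup>L M (stopped_exp_mart h t lam n)"
proof -
  let ?b = "\<lambda>x. of_bool (below h lam n x) :: real"
  have integrable: "integrable M (stopped_exp_mart h t lam n)"
    "integrable M (\<lambda>x. ?b x * exp_mart h t (Suc n) x)" "integrable M (\<lambda>x. ?b x * exp_mart h t n x)"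
      by (rule integrable_cube_constant[OF cube_constant_stopped_exp_mart])
        (rule integrable_cube_constant[OF cube_constant_mult[OF cube_constant_mono[OF _ cube_constant_below]
            cube_constant_exp_mart]], simp,
         rule integrable_cube_constant[OF cube_constant_mult[OF cube_constant_below cube_constant_exp_mart]])
  have "integral\<^sup>L M (stopped_exp_mart h t lam (Suc n))
        = integral\<^sup>L M (stopped_exp_mart h t lam n)
          + (integral\<^sup>L M (\<lambda>x. ?b x * exp_mart h t (Suc n) x) - integral\<^sup>L M (\<lambda>x. ?b x * exp_mart h t n x))"
    unfolding stopped_exp_mart_Suc_eq using integrable by (simp add: algebra_simps)
  also have "\<dots> \<le> integral\<^sup>L M (stopped_exp_mart h t lam n)"
    using integral_exp_mart_Suc_le[OF alpha h cube_constant_below] by simp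
  finally show ?thesis .
qed

lemma stopped_exp_mart_not_below:
  "\<not> below h lam n x \<Longrightarrow> \<exists>k\<le>n. stopped_exp_mart h t lam n x = exp_mart h t k x \<and> lam < mart h k x"
proof (induction n)
  case 0
  then have "lam < mart h 0 x" unfolding below_def by simp
  then show ?case by (intro exI[of _ 0]) simp
next
  case (Suc n)
  show ?case
  proof (cases "below h lam n x")
    case True
    have "lam < mart h (Suc n) x"
    proof (rule ccontr)
      assume "\<not> lam < mart h (Suc n) x"
      then have "below h lam (Suc n) x" using True unfolding below_def by (simp add: le_Suc_eq)
      then show False using Suc.prems by contradiction
    qed
    then show ?thesis using True by (intro exI[of _ "Suc n"]) simp
  next
    case False
    then obtain k where "k \<le> n" "stopped_exp_mart h t lam n x = exp_mart h t k x" "lam < mart h k x"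
      using Suc.IH by blast
    then show ?thesis using False by (intro exI[of _ k]) simp
  qed
qed

lemma mart_zero:
  assumes h: "integrable M h" "integral\<^sup>L M h = 0" and x: "x \<in> space M"
  shows "mart h 0 x = 0"
proof -
  have "cube 0 x = space M" using D_zero[OF cube_in_D[OF x]] mem_cube[OF x, of 0] by blast
  then show ?thesis unfolding mart_def avg_def using set_integral_space[OF h(1)] h(2) by simp
qed

lemma integral_stopped_exp_mart_le_one:
  assumes alpha: "\<alpha> \<le> 1/2" and h: "integrable M h" "integral\<^sup>L M h = 0"
  shows "integral\<^sup>L M (stopped_exp_mart h t lam n) \<le> 1"
proof (induction n)
  case 0
  have "integral\<^sup>L M (stopped_exp_mart h t lam 0) = integral\<^sup>L M (\<lambda>_. 1::real)"
    by (rule Bochner_Integration.integral_cong) (simp_all add: exp_mart_def sqsum_def mart_zero[OF h])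
  then show ?case by (simp add: prob_space del: stopped_exp_mart.simps)
next
  case (Suc n)
  then show ?case using integral_stopped_exp_mart_Suc_le[OF alpha h(1), of t lam n] by linarith
qed

section \<open>Tail bounds\<close>

lemma borel_measurable_mart [measurable]: "mart h k \<in> borel_measurable M"
  using integrable_cube_constant[OF cube_constant_mart[OF order_refl]] by blast

lemma measure_mart_exceeds_upto_le:
  assumes alpha: "\<alpha> \<le> 1/2" and h: "integrable M h" "integral\<^sup>L M h = 0" and t: "0 < t"
    and S: "AE x in M. \<forall>n. sqsum h n x \<le> S^2"
  shows "measure M {x\<in>space M. \<exists>k\<le>N. lam < mart h k x} \<le> exp (- (t*lam) + t^2/(4*\<alpha>) * S^2)"
proof -
  define E where "E = {x\<in>space M. \<exists>k\<le>N. lam < mart h k x}"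
  define B where "B = exp (t*lam - t^2/(4*\<alpha>) * S^2)"
  have E: "E \<in> sets M" unfolding E_def by measurable
  have "AE x in M. B * indicator E x \<le> stopped_exp_mart h t lam N x"
    using S
  proof eventually_elim
    case (elim x)
    show ?case
    proof (cases "x \<in> E")
      case True
      then have "\<not> below h lam N x" unfolding E_def below_def by (auto simp: not_le)
      then obtain k where k: "stopped_exp_mart h t lam N x = exp_mart h t k x" "lam < mart h k x"
        using stopped_exp_mart_not_below by blast
      have "t * lam \<le> t * mart h k x" using k(2) t by simp
      moreover have "t^2/(4*\<alpha>) * sqsum h k x \<le> t^2/(4*\<alpha>) * S^2"
        using elim alpha_pos by (intro mult_left_mono) auto
      ultimately have "B \<le> exp_mart h t k x" unfolding B_def exp_mart_def by simp
      then show ?thesis using True k(1) by simp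
    next
      case False
      then show ?thesis using stopped_exp_mart_pos[of h t lam N x] by simp
    qed
  qed
  note AE_le = this
  have "B * measure M E = integral\<^sup>L M (\<lambda>x. B * indicator E x)" using E by simp
  also have "\<dots> \<le> integral\<^sup>L M (stopped_exp_mart h t lam N)"
    using E AE_le integrable_cube_constant[OF cube_constant_stopped_exp_mart]
    by (intro integral_mono_AE) (auto simp: less_top[symmetric])
  also have "\<dots> \<le> 1" by (rule integral_stopped_exp_mart_le_one[OF alpha h])
  finally have "measure M E \<le> 1 / B" by (simp add: B_def field_simps)
  also have "1 / B = exp (- (t*lam) + t^2/(4*\<alpha>) * S^2)"
    unfolding B_def by (simp add: exp_minus[symmetric] inverse_eq_divide[symmetric])
  finally show ?thesis unfolding E_def .
qed

lemma sets_mart_exceeds: "{x\<in>space M. \<exists>n. lam < mart h n x} \<in> sets M"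
  by measurable

lemma measure_mart_exceeds_le:
  assumes alpha: "\<alpha> \<le> 1/2" and h: "integrable M h" "integral\<^sup>L M h = 0" and t: "0 < t"
    and S: "AE x in M. \<forall>n. sqsum h n x \<le> S^2"
  shows "measure M {x\<in>space M. \<exists>n. lam < mart h n x} \<le> exp (- (t*lam) + t^2/(4*\<alpha>) * S^2)"
proof -
  define E where "E N = {x\<in>space M. \<exists>k\<le>N. lam < mart h k x}" for N
  have E: "E N \<in> sets M" for N unfolding E_def by measurable
  have "incseq E" unfolding E_def incseq_def by (auto intro: order_trans)
  then have "(\<lambda>N. measure M (E N)) \<longlonglongrightarrow> measure M (\<Union>N. E N)"
    using E by (intro finite_Lim_measure_incseq) auto
  moreover have "(\<Union>N. E N) = {x\<in>space M. \<exists>n. lam < mart h n x}" unfolding E_def by auto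
  ultimately show ?thesis
    using measure_mart_exceeds_upto_le[OF alpha h t S] unfolding E_def
    by (intro LIMSEQ_le_const2) auto
qed

lemma cond_exp_n_eq_mart: "x \<in> space M \<Longrightarrow> cond_exp_n M D n f x = mart f n x"
  unfolding cond_exp_n_def cube_exp_def infsum_finite[OF finite_D] mart_def
  by (rule sum_D_indicator)

lemma mdiff_eq:
  assumes Q: "Q \<in> D n"
  shows "mdiff M D n Q f x = (if x \<in> Q then mart f (Suc n) x - mart f n x else 0)"
proof -
  have "mdiff M D n Q f x
        = (\<Sum>R\<in>children D n Q. avg M f R * indicator R x) - avg M f Q * indicator Q x"
    unfolding mdiff_def cube_exp_def infsum_finite[OF finite_children] ..
  also have "\<dots> = (if x \<in> Q then avg M f (cube (Suc n) x) else 0) - avg M f Q * indicator Q x"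
    using sum_children_indicator[OF Q] by simp
  finally show ?thesis unfolding mart_def using cube_eq[OF Q] by (simp split: if_splits)
qed

lemma sqsum_le_sqfun_sq:
  assumes x: "x \<in> space M"
  shows "ennreal (sqsum f N x) \<le> sqfun_sq M D f x"
proof -
  define g where "g p = ennreal ((mdiff M D (fst p) (snd p) f x)\<^sup>2)" for p
  define along where "along k = (k, cube k x)" for k :: nat
  have "ennreal (sqsum f N x) = (\<Sum>k<N. ennreal ((mart f (Suc k) x - mart f k x)^2))"
    unfolding sqsum_def by (rule sum_ennreal[symmetric]) simp
  also have "\<dots> = (\<Sum>k<N. g (along k))"
    unfolding g_def along_def using mdiff_eq[OF cube_in_D[OF x]] mem_cube[OF x] by simp
  also have "\<dots> = infsum g (along ` {..<N})"
    by (subst infsum_finite) (auto simp: sum.reindex inj_on_def along_def)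
  also have "\<dots> \<le> infsum g (Sigma UNIV D)"
  proof (rule infsum_mono_neutral)
    show "g summable_on Sigma UNIV D" "g summable_on (along ` {..<N})"
      by (auto intro: nonneg_summable_on_complete)
    show "\<And>y. y \<in> along ` {..<N} - Sigma UNIV D \<Longrightarrow> g y \<le> 0"
      unfolding along_def using cube_in_D[OF x] by auto
  qed auto
  also have "\<dots> = sqfun_sq M D f x" unfolding sqfun_sq_def g_def ..
  finally show ?thesis .
qed

lemma AE_sqsum_le:
  assumes S: "0 \<le> S" "AE x in M. sqfun M D f x \<le> ereal S"
  shows "AE x in M. \<forall>n. sqsum f n x \<le> S^2"
  using AE_space S(2)
proof eventually_elim
  case (elim x)
  then have finite: "sqfun_sq M D f x \<noteq> \<infinity>" unfolding sqfun_def by auto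
  define e where "e = enn2real (sqfun_sq M D f x)"
  have e: "0 \<le> e" "sqfun_sq M D f x = ennreal e"
    unfolding e_def using finite by (auto simp: ennreal_enn2real_if)
  have "sqrt e \<le> S" using elim(2) finite unfolding sqfun_def e_def by simp
  then have "e \<le> S^2" using e(1) by (metis real_sqrt_le_iff real_sqrt_unique S(1))
  moreover have "sqsum f n x \<le> e" for n
    using sqsum_le_sqfun_sq[OF elim(1), of f n] e sum_nonneg[of "{..<n}"]
    by (simp add: ennreal_le_iff sqsum_def)
  ultimately show ?case by (meson order_trans)
qed

lemma mart_uminus: "mart (\<lambda>x. - f x) n x = - mart f n x"
  unfolding mart_def avg_def set_lebesgue_integral_def by simp

lemma sqsum_uminus: "sqsum (\<lambda>x. - f x) n x = sqsum f n x"
  unfolding sqsum_def mart_uminus by (simp add: power2_commute algebra_simps)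

lemma maxfun_exceeds_subset:
  "{x \<in> space M. ereal lam < maxfun M D f x}
     \<subseteq> {x\<in>space M. \<exists>n. lam < mart f n x} \<union> {x\<in>space M. \<exists>n. lam < mart (\<lambda>x. - f x) n x}"
proof
  fix x assume "x \<in> {x \<in> space M. ereal lam < maxfun M D f x}"
  then have x: "x \<in> space M" and "ereal lam < (SUP n. ereal \<bar>cond_exp_n M D n f x\<bar>)"
    unfolding maxfun_def by auto
  then obtain n where "lam < \<bar>mart f n x\<bar>"
    using cond_exp_n_eq_mart[OF x] by (auto simp: less_SUP_iff)
  then have "lam < mart f n x \<or> lam < mart (\<lambda>x. - f x) n x" unfolding mart_uminus by linarith
  then show "x \<in> {x\<in>space M. \<exists>n. lam < mart f n x} \<union> {x\<in>space M. \<exists>n. lam < mart (\<lambda>x. - f x) n x}"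
    using x by auto
qed

lemma measure_maxfun_exceeds_le:
  assumes alpha: "\<alpha> \<le> 1/2" and f: "integrable M f" "integral\<^sup>L M f = 0" and t: "0 < t"
    and S: "0 \<le> S" "AE x in M. sqfun M D f x \<le> ereal S"
  shows "measure M {x \<in> space M. ereal lam < maxfun M D f x} \<le> 2 * exp (- (t*lam) + t^2/(4*\<alpha>) * S^2)"
proof -
  have f': "integrable M (\<lambda>x. - f x)" "integral\<^sup>L M (\<lambda>x. - f x) = 0" using f by simp_all
  have S': "AE x in M. \<forall>n. sqsum (\<lambda>x. - f x) n x \<le> S^2"
    using AE_sqsum_le[OF S] by (simp add: sqsum_uminus)
  have "measure M {x \<in> space M. ereal lam < maxfun M D f x}
        \<le> measure M ({x\<in>space M. \<exists>n. lam < mart f n x} \<union> {x\<in>space M. \<exists>n. lam < mart (\<lambda>x. - f x) n x})"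
    using maxfun_exceeds_subset by (intro finite_measure_mono) auto
  also have "\<dots> \<le> measure M {x\<in>space M. \<exists>n. lam < mart f n x} + measure M {x\<in>space M. \<exists>n. lam < mart (\<lambda>x. - f x) n x}"
    by (intro measure_Un_le sets_mart_exceeds)
  also have "\<dots> \<le> 2 * exp (- (t*lam) + t^2/(4*\<alpha>) * S^2)"
    using measure_mart_exceeds_le[OF alpha f t AE_sqsum_le[OF S], of lam]
      measure_mart_exceeds_le[OF alpha f' t S', of lam] by linarith
  finally show ?thesis .
qed

end

lemma nonpos_if_le_exp_decay:
  fixes m lam :: real
  assumes lam: "0 < lam" and le: "\<And>t. 0 < t \<Longrightarrow> m \<le> 2 * exp (- (t*lam))"
  shows "m \<le> 0"
proof (rule ccontr)
  assume "\<not> m \<le> 0"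
  then have m: "0 < m" by simp
  have "m < 4" using le[of 1] lam by (smt (verit) exp_less_one_iff mult_pos_pos)
  define t where "t = ln (4/m) / lam"
  have "0 < t" unfolding t_def using m \<open>m < 4\<close> lam by (simp add: ln_gt_zero)
  moreover have "exp (- (t*lam)) = m/4" unfolding t_def using m lam by (simp add: exp_minus)
  ultimately show False using le[of t] m by simp
qed

lemma (in prob_space) esssup_nonneg_finite:
  fixes g :: "'a \<Rightarrow> ereal"
  assumes "\<And>x. 0 \<le> g x" and "esssup M g < \<infinity>"
  obtains S where "esssup M g = ereal S" "0 \<le> S" "AE x in M. g x \<le> ereal S"
proof -
  have AE: "AE x in M. g x \<le> esssup M g" by (rule esssup_AE)
  then have "AE x in M. 0 \<le> esssup M g" by eventually_elim (use assms(1) in \<open>rule order_trans\<close>)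
  then have "0 \<le> esssup M g" by (simp add: AE_const)
  with assms(2) obtain S where "esssup M g = ereal S" by (cases "esssup M g") auto
  then show ?thesis using that \<open>0 \<le> esssup M g\<close> AE by auto
qed

theorem theorem2p4:
  fixes M :: "'a measure" and F D :: "nat \<Rightarrow> 'a set set"
    and f :: "'a \<Rightarrow> real" and \<alpha> lam :: real
  assumes "prob_space M"
    and "atomic_filtration M F D"
    and "homogeneous M D \<alpha>"
    and "0 < \<alpha>" and "\<alpha> \<le> 1/2"
    and "integrable M f"
    and "sqfun M D f \<in> borel_measurable M"
    and "esssup M (sqfun M D f) < \<infinity>"
    and "integral\<^sup>L M f = 0"
    and "lam > 0"
  shows "measure M {x \<in> space M. maxfun M D f x > ereal lam}
           \<le> (if esssup M (sqfun M D f) = 0 then 0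
               else 2 * exp (- \<alpha> * lam\<^sup>2 / (real_of_ereal (esssup M (sqfun M D f)))\<^sup>2))"
proof -
  interpret homogeneous_filtration M F D \<alpha>
    using assms(1-4) by (simp add: homogeneous_filtration_def homogeneous_filtration_axioms_def)
  have "\<And>x. 0 \<le> sqfun M D f x" unfolding sqfun_def by simp
  then obtain S where S: "esssup M (sqfun M D f) = ereal S" "0 \<le> S" "AE x in M. sqfun M D f x \<le> ereal S"
    using esssup_nonneg_finite assms(8) by blast
  have bound: "measure M {x \<in> space M. ereal lam < maxfun M D f x} \<le> 2 * exp (- (t*lam) + t^2/(4*\<alpha>) * S^2)"
    if "0 < t" for t
    using measure_maxfun_exceeds_le[OF assms(5,6,9) that S(2,3)] .
  show ?thesis
  proof (cases "S = 0")
    case True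
    then show ?thesis
      using nonpos_if_le_exp_decay[OF assms(10)] bound S(1) by (simp add: measure_nonneg antisym)
  next
    case False
    define t where "t = 2*\<alpha>*lam/S^2"
    have "0 < t" unfolding t_def using assms(4,10) False by simp
    moreover have "- (t*lam) + t^2/(4*\<alpha>) * S^2 = - \<alpha> * lam\<^sup>2 / S\<^sup>2"
      unfolding t_def using assms(4) False by (simp add: field_simps power2_eq_square)
    ultimately show ?thesis using bound S(1) False by fastforce
  qed
qed

end
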